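(* Every finitely generated infinite amenable group is extraterrestrial.
   Context: A finitely generated group is extraterrestrial if its Cayley graph $\mathrm{Cay}(\Gamma,S)$ with respect to some (equivalently any) finite symmetric generating set $S$ is extraterrestrial. A graph $G=(V,E)$ is extraterrestrial if for every $m\in\mathbb N$ there exists $k\in\mathbb N$ such that for every $r\in\mathbb N$ there exists an $(m,k,r)$-UFO: a triple $(U,F,O)$ of pairwise disjoint finite subsets of $V$ with $U\neq\emptyset$ such that $|U|\ge m|F|$, there is a bijection $\mu:U\to O$ with $d_G(u,\mu(u))\le k$ for all $u$, and every path (sequence of distinct vertices with consecutive ones adjacent) from a vertex of $U$ to a vertex of $O$ either contains a vertex of $F$ or has length at least $r$. *)

theory Defs
  imports "HOL-Algebra.Algebra"
begin

definition is_path :: "'v set \<Rightarrow> ('v \<Rightarrow> 'v \<Rightarrow> bool) \<Rightarrow> 'v list \<Rightarrow> bool" where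
  "is_path V E p \<longleftrightarrow> p \<noteq> [] \<and> distinct p \<and> set p \<subseteq> V \<and>
     (\<forall>i. Suc i < length p \<longrightarrow> E (p ! i) (p ! Suc i))"

definition dist_le :: "'v set \<Rightarrow> ('v \<Rightarrow> 'v \<Rightarrow> bool) \<Rightarrow> 'v \<Rightarrow> 'v \<Rightarrow> nat \<Rightarrow> bool" where
  "dist_le V E u v k \<longleftrightarrow>
     (\<exists>p. is_path V E p \<and> hd p = u \<and> last p = v \<and> length p - 1 \<le> k)"

definition is_UFO ::
  "'v set \<Rightarrow> ('v \<Rightarrow> 'v \<Rightarrow> bool) \<Rightarrow> nat \<Rightarrow> nat \<Rightarrow> nat \<Rightarrow> 'v set \<Rightarrow> 'v set \<Rightarrow> 'v set \<Rightarrow> bool" where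
  "is_UFO V E m k r U F Ob \<longleftrightarrow>
     U \<subseteq> V \<and> F \<subseteq> V \<and> Ob \<subseteq> V \<and> finite U \<and> finite F \<and> finite Ob \<and>
     U \<inter> F = {} \<and> U \<inter> Ob = {} \<and> F \<inter> Ob = {} \<and> U \<noteq> {} \<and>
     card U \<ge> m * card F \<and>
     (\<exists>\<mu>. bij_betw \<mu> U Ob \<and> (\<forall>u\<in>U. dist_le V E u (\<mu> u) k)) \<and>
     (\<forall>p. is_path V E p \<and> hd p \<in> U \<and> last p \<in> Ob \<longrightarrow>
          set p \<inter> F \<noteq> {} \<or> length p - 1 \<ge> r)"

definition extraterrestrial :: "'v set \<Rightarrow> ('v \<Rightarrow> 'v \<Rightarrow> bool) \<Rightarrow> bool" where
  "extraterrestrial V E \<longleftrightarrow>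
     (\<forall>m::nat. \<exists>k::nat. \<forall>r::nat. \<exists>U F Ob. is_UFO V E m k r U F Ob)"

text \<open>Cayley graph of G w.r.t. S: vertices the group elements, g adjacent to g s for s in S
  (loops omitted; they play no role for paths or distances).\<close>

definition cayley_adj :: "('a, 'b) monoid_scheme \<Rightarrow> 'a set \<Rightarrow> 'a \<Rightarrow> 'a \<Rightarrow> bool" where
  "cayley_adj G S x y \<longleftrightarrow> x \<in> carrier G \<and> y \<in> carrier G \<and> x \<noteq> y \<and>
     (\<exists>s\<in>S. y = x \<otimes>\<^bsub>G\<^esub> s)"

definition finite_symmetric_generating_set :: "('a, 'b) monoid_scheme \<Rightarrow> 'a set \<Rightarrow> bool" where
  "finite_symmetric_generating_set G S \<longleftrightarrow>
     finite S \<and> S \<subseteq> carrier G \<and> (\<forall>s\<in>S. inv\<^bsub>G\<^esub> s \<in> S) \<and> generate G S = carrier G"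

definition finitely_generated_group :: "('a, 'b) monoid_scheme \<Rightarrow> bool" where
  "finitely_generated_group G \<longleftrightarrow> group G \<and> (\<exists>S. finite S \<and> S \<subseteq> carrier G \<and> generate G S = carrier G)"

definition extraterrestrial_group :: "('a, 'b) monoid_scheme \<Rightarrow> bool" where
  "extraterrestrial_group G \<longleftrightarrow>
     (\<exists>S. finite_symmetric_generating_set G S \<and> extraterrestrial (carrier G) (cayley_adj G S))"

definition amenable_group :: "('a, 'b) monoid_scheme \<Rightarrow> bool" where
  "amenable_group G \<longleftrightarrow> group G \<and>
     (\<exists>\<mu> :: 'a set \<Rightarrow> real.
        \<mu> (carrier G) = 1 \<and>
        (\<forall>A. A \<subseteq> carrier G \<longrightarrow> \<mu> A \<ge> 0) \<and>
        (\<forall>A B. A \<subseteq> carrier G \<longrightarrow> B \<subseteq> carrier G \<longrightarrow> A \<inter> B = {} \<longrightarrow>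
               \<mu> (A \<union> B) = \<mu> A + \<mu> B) \<and>
        (\<forall>g A. g \<in> carrier G \<longrightarrow> A \<subseteq> carrier G \<longrightarrow> \<mu> (g <#\<^bsub>G\<^esub> A) = \<mu> A))"

end

theory Submission
  imports Defs
begin

(* If every finite B \<subseteq> G had at least |B|/m points in its right boundary BS - B, Hall's
  marriage theorem (for infinite families of finite sets) would inject m+1 copies of G into m
  copies, moving each point x only to some x s with s \<in> S \<union> {1}; summing a right-invariant
  mean over the pieces of this injection then gives m+1 \<le> m. So for every m there is a finite
  U with m |F| \<le> |U| for its boundary F. In the Cayley graph F separates U from all other
  vertices, so pairing U with any |U| vertices O outside U \<union> F (G is infinite) yields an
  (m,k,r)-UFO for every r, where k is the largest distance between a point of U and its
  partner. *)

definition hall_condition :: "'a set \<Rightarrow> ('a \<Rightarrow> 'b set) \<Rightarrow> bool" where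
  "hall_condition D N \<longleftrightarrow> (\<forall>W. W \<subseteq> D \<longrightarrow> finite W \<longrightarrow> card W \<le> card (\<Union>(N ` W)))"

lemma hall_conditionD: "hall_condition D N \<Longrightarrow> W \<subseteq> D \<Longrightarrow> finite W \<Longrightarrow> card W \<le> card (\<Union>(N ` W))"
  unfolding hall_condition_def by blast

lemma hall_condition_tight_Un:
  assumes fin: "\<And>x. x \<in> D \<Longrightarrow> finite (N x)" and hall: "hall_condition D N"
    and A: "A \<subseteq> D" "finite A" "card (\<Union>(N ` A)) = card A"
    and B: "B \<subseteq> D" "finite B" "card (\<Union>(N ` B)) = card B"
  shows "card (\<Union>(N ` (A \<union> B))) = card (A \<union> B)"
proof -
  have fA: "finite (\<Union>(N ` A))" and fB: "finite (\<Union>(N ` B))" using A B fin by auto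
  have "card (A \<inter> B) \<le> card (\<Union>(N ` (A \<inter> B)))"
    using A B by (intro hall_conditionD[OF hall]) auto
  also have "\<dots> \<le> card (\<Union>(N ` A) \<inter> \<Union>(N ` B))"
    using fA by (intro card_mono) auto
  finally have "card (A \<inter> B) \<le> card (\<Union>(N ` A) \<inter> \<Union>(N ` B))" .
  moreover have "card (A \<union> B) \<le> card (\<Union>(N ` (A \<union> B)))"
    using A B by (intro hall_conditionD[OF hall]) auto
  moreover have "card (\<Union>(N ` A) \<union> \<Union>(N ` B)) + card (\<Union>(N ` A) \<inter> \<Union>(N ` B)) = card A + card B"
    using card_Un_Int[OF fA fB] A B by simp
  moreover have "card (A \<union> B) + card (A \<inter> B) = card A + card B"
    using card_Un_Int[OF A(2) B(2)] by simp
  ultimately show ?thesis by (simp add: image_Un)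
qed

lemma hall_condition_tight_UN:
  assumes fin: "\<And>x. x \<in> D \<Longrightarrow> finite (N x)" and hall: "hall_condition D N"
    and "finite I"
    and tight: "\<And>i. i \<in> I \<Longrightarrow> W i \<subseteq> D \<and> finite (W i) \<and> card (\<Union>(N ` W i)) = card (W i)"
  shows "card (\<Union>(N ` \<Union>(W ` I))) = card (\<Union>(W ` I))"
  using \<open>finite I\<close> tight
proof (induction I rule: finite_induct)
  case empty
  then show ?case by simp
next
  case (insert i I)
  then show ?case
    using hall_condition_tight_Un[OF fin hall, of "W i" "\<Union>(W ` I)"] by auto
qed

lemma hall_condition_violation_tight:
  assumes fin: "\<And>x. x \<in> D \<Longrightarrow> finite (N x)" and hall: "hall_condition D N"
    and W: "W \<subseteq> D" "finite W" and lt: "card (\<Union>x\<in>W. N x - {y}) < card W"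
  shows "card (\<Union>(N ` W)) = card W" "y \<in> \<Union>(N ` W)"
proof -
  have le: "card W \<le> card (\<Union>(N ` W))" using hall_conditionD[OF hall W] .
  have eq: "(\<Union>x\<in>W. N x - {y}) = \<Union>(N ` W) - {y}" by auto
  show "y \<in> \<Union>(N ` W)" using lt le eq by (metis Diff_empty Diff_insert0 leD)
  moreover have "finite (\<Union>(N ` W))" using W fin by auto
  ultimately show "card (\<Union>(N ` W)) = card W" using lt le eq by simp
qed

lemma hall_condition_Diff_singleton:
  assumes fin: "\<And>x. x \<in> D \<Longrightarrow> finite (N x)" and hall: "hall_condition D N" and d: "d \<in> D"
  shows "\<exists>y\<in>N d. hall_condition (D - {d}) (\<lambda>x. N x - {y})"
proof (rule ccontr)
  assume "\<not> ?thesis"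
  then have "\<forall>y\<in>N d. \<exists>W. W \<subseteq> D - {d} \<and> finite W \<and> card (\<Union>x\<in>W. N x - {y}) < card W"
    unfolding hall_condition_def by (auto simp: not_le)
  then obtain W where W: "\<And>y. y \<in> N d \<Longrightarrow>
      W y \<subseteq> D - {d} \<and> finite (W y) \<and> card (\<Union>x\<in>W y. N x - {y}) < card (W y)"
    by metis
  have tight: "card (\<Union>(N ` W y)) = card (W y)" "y \<in> \<Union>(N ` W y)" if "y \<in> N d" for y
    using W[OF that] by (intro hall_condition_violation_tight[OF fin hall]; auto)+
  define Y where "Y = \<Union>(W ` N d)"
  have Y: "Y \<subseteq> D - {d}" "finite Y" using W fin d unfolding Y_def by auto
  have "card (\<Union>(N ` Y)) = card Y"
    unfolding Y_def using W tight fin d by (intro hall_condition_tight_UN[OF fin hall]) auto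
  moreover have "N d \<subseteq> \<Union>(N ` Y)" unfolding Y_def using tight by blast
  then have "\<Union>(N ` insert d Y) = \<Union>(N ` Y)" by auto
  moreover have "card (insert d Y) \<le> card (\<Union>(N ` insert d Y))"
    using Y d by (intro hall_conditionD[OF hall]) auto
  moreover have "card (insert d Y) = Suc (card Y)" using Y by (subst card_insert_disjoint) auto
  ultimately show False by simp
qed

lemma single_valued_Union_chain:
  assumes "subset.chain A C" and "\<And>R. R \<in> C \<Longrightarrow> single_valued R"
  shows "single_valued (\<Union>C)"
proof (rule single_valuedI)
  fix x y z assume "(x, y) \<in> \<Union>C" "(x, z) \<in> \<Union>C"
  then obtain R R' where R: "R \<in> C" "R' \<in> C" "(x, y) \<in> R" "(x, z) \<in> R'" by blast
  then show "y = z" using assms unfolding subset_chain_def by (metis single_valuedD subsetD)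
qed

definition hall_extendable_matchings :: "'a set \<Rightarrow> ('a \<Rightarrow> 'b set) \<Rightarrow> ('a \<times> 'b) set set" where
  "hall_extendable_matchings D N =
     {R. R \<subseteq> Sigma D N \<and> single_valued R \<and> single_valued (converse R) \<and>
         hall_condition (D - Domain R) (\<lambda>x. N x - Range R)}"

text \<open>Zorn's lemma applies because every N x is finite: Hall's condition for a finite W
  involves only finitely many matched values, and these all lie in one member of a chain.\<close>

lemma Union_chain_in_hall_extendable_matchings:
  assumes fin: "\<And>x. x \<in> D \<Longrightarrow> finite (N x)"
    and C: "C \<noteq> {}" "subset.chain (hall_extendable_matchings D N) C"
  shows "\<Union>C \<in> hall_extendable_matchings D N"
proof -
  have CM: "\<And>R. R \<in> C \<Longrightarrow> R \<in> hall_extendable_matchings D N"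
    and comparable: "\<And>R R'. R \<in> C \<Longrightarrow> R' \<in> C \<Longrightarrow> R \<subseteq> R' \<or> R' \<subseteq> R"
    using C(2) unfolding subset_chain_def by blast+
  have "\<Union>C \<subseteq> Sigma D N" using CM unfolding hall_extendable_matchings_def by blast
  moreover have "single_valued (\<Union>C)"
    using CM C(2) unfolding hall_extendable_matchings_def
    by (blast intro: single_valued_Union_chain)
  moreover have "single_valued (converse (\<Union>C))"
  proof -
    have "single_valued (\<Union>(converse ` C))"
      using CM comparable converse_mono unfolding hall_extendable_matchings_def
      by (intro single_valued_Union_chain[of UNIV]) (auto simp: subset_chain_def)
    moreover have "\<Union>(converse ` C) = converse (\<Union>C)" by blast
    ultimately show ?thesis by simp
  qed
  moreover have "hall_condition (D - Domain (\<Union>C)) (\<lambda>x. N x - Range (\<Union>C))"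
    unfolding hall_condition_def
  proof (intro allI impI)
    fix W assume W: "W \<subseteq> D - Domain (\<Union>C)" "finite W"
    have "finite (\<Union>(N ` W) \<inter> Range (\<Union>C))"
      using W fin by (intro finite_Int disjI1 finite_UN_I) auto
    moreover have "\<Union>(N ` W) \<inter> Range (\<Union>C) \<subseteq> \<Union>(Range ` C)" by blast
    moreover have "Range ` C \<noteq> {}" using C(1) by blast
    moreover have "subset.chain UNIV (Range ` C)"
      using comparable Range_mono unfolding subset_chain_def by blast
    ultimately obtain B where "B \<in> Range ` C" "\<Union>(N ` W) \<inter> Range (\<Union>C) \<subseteq> B"
      by (rule finite_subset_Union_chain)
    then obtain R where R: "R \<in> C" "\<Union>(N ` W) \<inter> Range (\<Union>C) \<subseteq> Range R" by blast
    have "card W \<le> card (\<Union>x\<in>W. N x - Range R)"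
      using CM[OF R(1)] W R(1) unfolding hall_extendable_matchings_def
      by (intro hall_conditionD[of "D - Domain R"]) auto
    also have "(\<Union>x\<in>W. N x - Range R) = (\<Union>x\<in>W. N x - Range (\<Union>C))"
      using R by blast
    finally show "card W \<le> card (\<Union>((\<lambda>x. N x - Range (\<Union>C)) ` W))" .
  qed
  ultimately show ?thesis unfolding hall_extendable_matchings_def by blast
qed

lemma hall_extendable_matchings_insert:
  assumes fin: "\<And>x. x \<in> D \<Longrightarrow> finite (N x)"
    and R: "R \<in> hall_extendable_matchings D N" and d: "d \<in> D" "d \<notin> Domain R"
  shows "\<exists>y. insert (d, y) R \<in> hall_extendable_matchings D N"
proof -
  have "hall_condition (D - Domain R) (\<lambda>x. N x - Range R)"
    using R unfolding hall_extendable_matchings_def by blast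
  then obtain y where y: "y \<in> N d" "y \<notin> Range R"
    and hall: "hall_condition (D - Domain R - {d}) (\<lambda>x. N x - Range R - {y})"
    using hall_condition_Diff_singleton[of "D - Domain R" "\<lambda>x. N x - Range R" d] fin d by blast
  have "D - Domain (insert (d, y) R) = D - Domain R - {d}"
    and "(\<lambda>x. N x - Range (insert (d, y) R)) = (\<lambda>x. N x - Range R - {y})" by auto
  moreover have "single_valued (insert (d, y) R)" "single_valued (converse (insert (d, y) R))"
    using R d(2) y(2) unfolding hall_extendable_matchings_def single_valued_def by blast+
  ultimately have "insert (d, y) R \<in> hall_extendable_matchings D N"
    using R d(1) y(1) hall unfolding hall_extendable_matchings_def by auto
  then show ?thesis ..
qed

theorem hall_marriage:
  assumes fin: "\<And>x. x \<in> D \<Longrightarrow> finite (N x)" and hall: "hall_condition D N"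
  obtains f where "inj_on f D" "\<And>x. x \<in> D \<Longrightarrow> f x \<in> N x"
proof -
  have "\<exists>M\<in>hall_extendable_matchings D N. \<forall>R\<in>hall_extendable_matchings D N. M \<subseteq> R \<longrightarrow> R = M"
  proof (rule subset_Zorn_nonempty)
    have "{} \<in> hall_extendable_matchings D N"
      using hall unfolding hall_extendable_matchings_def by simp
    then show "hall_extendable_matchings D N \<noteq> {}" by blast
    show "\<Union>C \<in> hall_extendable_matchings D N"
      if "C \<noteq> {}" "subset.chain (hall_extendable_matchings D N) C" for C
      using fin that by (rule Union_chain_in_hall_extendable_matchings)
  qed
  then obtain M where M: "M \<in> hall_extendable_matchings D N"
    and maximal: "\<And>R. R \<in> hall_extendable_matchings D N \<Longrightarrow> M \<subseteq> R \<Longrightarrow> R = M"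
    by blast
  have "D \<subseteq> Domain M"
  proof
    fix d assume "d \<in> D"
    show "d \<in> Domain M"
    proof (rule ccontr)
      assume "d \<notin> Domain M"
      then obtain y where "insert (d, y) M \<in> hall_extendable_matchings D N"
        using hall_extendable_matchings_insert[OF fin M \<open>d \<in> D\<close>] by blast
      with maximal \<open>d \<notin> Domain M\<close> show False by blast
    qed
  qed
  define f where "f x = (SOME y. (x, y) \<in> M)" for x
  have f: "(x, f x) \<in> M" if "x \<in> D" for x
    unfolding f_def using \<open>D \<subseteq> Domain M\<close> that by (auto intro: someI)
  show thesis
  proof
    have "single_valued (converse M)" using M unfolding hall_extendable_matchings_def by blast
    then show "inj_on f D" using f by (metis converseI inj_onI single_valuedD)
    show "f x \<in> N x" if "x \<in> D" for x
      using f[OF that] M unfolding hall_extendable_matchings_def by blast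
  qed
qed

locale mean =
  fixes V :: "'a set" and \<nu> :: "'a set \<Rightarrow> real"
  assumes nonneg: "A \<subseteq> V \<Longrightarrow> 0 \<le> \<nu> A"
    and additive: "A \<subseteq> V \<Longrightarrow> B \<subseteq> V \<Longrightarrow> A \<inter> B = {} \<Longrightarrow> \<nu> (A \<union> B) = \<nu> A + \<nu> B"
    and total: "\<nu> V = 1"
begin

lemma empty_eq_0: "\<nu> {} = 0"
  using additive[of "{}" "{}"] by simp

lemma sum_disjoint_family:
  assumes "finite K" "\<And>k. k \<in> K \<Longrightarrow> F k \<subseteq> V" "disjoint_family_on F K"
  shows "(\<Sum>k\<in>K. \<nu> (F k)) = \<nu> (\<Union>k\<in>K. F k)"
  using assms
proof (induction K rule: finite_induct)
  case empty
  then show ?case by (simp add: empty_eq_0)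
next
  case (insert k K)
  then have "F k \<inter> (\<Union>l\<in>K. F l) = {}" "F k \<subseteq> V" "(\<Union>l\<in>K. F l) \<subseteq> V"
    by (auto simp: disjoint_family_on_def)
  with insert show ?case
    using additive[of "F k" "\<Union>l\<in>K. F l"] by (simp add: disjoint_family_on_insert)
qed

lemma mono:
  assumes "A \<subseteq> B" "B \<subseteq> V"
  shows "\<nu> A \<le> \<nu> B"
proof -
  have "\<nu> (A \<union> (B - A)) = \<nu> A + \<nu> (B - A)" using assms by (intro additive) auto
  moreover have "A \<union> (B - A) = B" using assms by blast
  moreover have "0 \<le> \<nu> (B - A)" using assms by (intro nonneg) auto
  ultimately show ?thesis by simp
qed

lemma le_one: "A \<subseteq> V \<Longrightarrow> \<nu> A \<le> 1"
  using mono[of A V] total by simp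

end

locale right_invariant_mean = group G + mean "carrier G" \<nu>
  for G :: "('a, 'b) monoid_scheme" (structure) and \<nu> :: "'a set \<Rightarrow> real" +
  assumes right_invariant: "g \<in> carrier G \<Longrightarrow> A \<subseteq> carrier G \<Longrightarrow> \<nu> (A #> g) = \<nu> A"

text \<open>Amenability is defined through a left-invariant mean; composing it with inversion
  gives a right-invariant one, which suits the right Cayley graph.\<close>

lemma amenable_group_right_invariant_mean:
  assumes "amenable_group G"
  shows "\<exists>\<nu>. right_invariant_mean G \<nu>"
proof -
  interpret group G using assms unfolding amenable_group_def by blast
  obtain \<mu> :: "'a set \<Rightarrow> real" where total: "\<mu> (carrier G) = 1"
    and nonneg: "\<forall>A. A \<subseteq> carrier G \<longrightarrow> \<mu> A \<ge> 0"
    and additive: "\<forall>A B. A \<subseteq> carrier G \<longrightarrow> B \<subseteq> carrier G \<longrightarrow> A \<inter> B = {} \<longrightarrow>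
      \<mu> (A \<union> B) = \<mu> A + \<mu> B"
    and left_invariant: "\<forall>g A. g \<in> carrier G \<longrightarrow> A \<subseteq> carrier G \<longrightarrow> \<mu> (g <#\<^bsub>G\<^esub> A) = \<mu> A"
    using assms unfolding amenable_group_def by (elim conjE exE) (rule that)
  have inv_sub: "m_inv G ` A \<subseteq> carrier G" if "A \<subseteq> carrier G" for A
    using that by auto
  have "right_invariant_mean G (\<lambda>A. \<mu> (m_inv G ` A))"
  proof unfold_locales
    show "0 \<le> \<mu> (m_inv G ` A)" if "A \<subseteq> carrier G" for A
      using that by (simp add: nonneg inv_sub)
    show "\<mu> (m_inv G ` (A \<union> B)) = \<mu> (m_inv G ` A) + \<mu> (m_inv G ` B)"
      if "A \<subseteq> carrier G" "B \<subseteq> carrier G" "A \<inter> B = {}" for A B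
      using that inj_on_image_Int[OF inv_inj, of A B] by (simp add: image_Un additive inv_sub)
    have "x \<in> m_inv G ` carrier G" if "x \<in> carrier G" for x
      using that by (intro image_eqI[where x = "inv\<^bsub>G\<^esub> x"]) auto
    then have "m_inv G ` carrier G = carrier G" by auto
    then show "\<mu> (m_inv G ` carrier G) = 1" using total by simp
    show "\<mu> (m_inv G ` (A #>\<^bsub>G\<^esub> g)) = \<mu> (m_inv G ` A)"
      if "g \<in> carrier G" "A \<subseteq> carrier G" for g A
    proof -
      have "m_inv G ` (A #>\<^bsub>G\<^esub> g) = inv\<^bsub>G\<^esub> g <#\<^bsub>G\<^esub> m_inv G ` A"
        using that unfolding r_coset_def l_coset_def by (force simp: inv_mult_group)
      then show ?thesis using that by (simp add: left_invariant inv_sub)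
    qed
  qed
  then show ?thesis by blast
qed

lemma (in right_invariant_mean) sum_le_one_if_disjoint_translates:
  assumes "finite K" "\<And>k. k \<in> K \<Longrightarrow> A k \<subseteq> carrier G" "\<And>k. k \<in> K \<Longrightarrow> g k \<in> carrier G"
    and "disjoint_family_on (\<lambda>k. A k #> g k) K"
  shows "(\<Sum>k\<in>K. \<nu> (A k)) \<le> 1"
proof -
  have "(\<Sum>k\<in>K. \<nu> (A k)) = (\<Sum>k\<in>K. \<nu> (A k #> g k))"
    using assms by (simp add: right_invariant)
  also have "\<dots> = \<nu> (\<Union>k\<in>K. A k #> g k)"
    using assms by (intro sum_disjoint_family) (auto simp: r_coset_def)
  also have "\<dots> \<le> 1"
    using assms by (intro le_one) (auto simp: r_coset_def)
  finally show ?thesis .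
qed

lemma (in right_invariant_mean) card_le_if_inj_into_translates:
  assumes fin: "finite I" "finite J" "finite T" and T: "T \<subseteq> carrier G"
    and inj: "inj_on \<psi> (carrier G \<times> I)"
    and into: "\<And>x i. x \<in> carrier G \<Longrightarrow> i \<in> I \<Longrightarrow> \<psi> (x, i) \<in> (x <# T) \<times> J"
  shows "card I \<le> card J"
proof -
  define part where "part i t j = {x \<in> carrier G. \<psi> (x, i) = (x \<otimes> t, j)}" for i t j
  have cover: "(\<Sum>(t, j)\<in>T \<times> J. \<nu> (part i t j)) = 1" if i: "i \<in> I" for i
  proof -
    have "disjoint_family_on (\<lambda>(t, j). part i t j) (T \<times> J)"
      using T unfolding disjoint_family_on_def part_def by auto (metis l_cancel subsetD)
    then have "(\<Sum>(t, j)\<in>T \<times> J. \<nu> (part i t j)) = \<nu> (\<Union>(t, j)\<in>T \<times> J. part i t j)"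
      using fin unfolding case_prod_unfold by (intro sum_disjoint_family) (auto simp: part_def)
    also have "(\<Union>(t, j)\<in>T \<times> J. part i t j) = carrier G"
      using into[OF _ i] unfolding part_def l_coset_def by fastforce
    finally show ?thesis by (simp add: total)
  qed
  have pack: "(\<Sum>(i, t)\<in>I \<times> T. \<nu> (part i t j)) \<le> 1" if "j \<in> J" for j
  proof -
    have "(part i t j #> t) \<inter> (part i' t' j #> t') = {}"
      if idx: "i \<in> I" "i' \<in> I" "t \<in> T" "t' \<in> T" "(i, t) \<noteq> (i', t')" for i t i' t'
    proof (rule ccontr)
      assume "(part i t j #> t) \<inter> (part i' t' j #> t') \<noteq> {}"
      then obtain x x' where x: "x \<in> part i t j" "x' \<in> part i' t' j" "x \<otimes> t = x' \<otimes> t'"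
        unfolding r_coset_def by auto
      then have "\<psi> (x, i) = \<psi> (x', i')" unfolding part_def by simp
      moreover have "(x, i) \<in> carrier G \<times> I" "(x', i') \<in> carrier G \<times> I"
        using x idx unfolding part_def by auto
      ultimately have "x = x'" "i = i'" using inj_onD[OF inj] by blast+
      then show False using x idx T unfolding part_def by (auto simp: l_cancel subset_iff)
    qed
    then have "disjoint_family_on (\<lambda>(i, t). part i t j #> t) (I \<times> T)"
      unfolding disjoint_family_on_def by auto
    then show ?thesis
      using fin T unfolding case_prod_unfold
      by (intro sum_le_one_if_disjoint_translates) (auto simp: part_def)
  qed
  have "real (card I) = (\<Sum>i\<in>I. \<Sum>(t, j)\<in>T \<times> J. \<nu> (part i t j))"
    using cover by simp
  also have "\<dots> = (\<Sum>i\<in>I. \<Sum>j\<in>J. \<Sum>t\<in>T. \<nu> (part i t j))"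
    by (simp add: sum.cartesian_product [symmetric] sum.swap [of _ T])
  also have "\<dots> = (\<Sum>j\<in>J. \<Sum>(i, t)\<in>I \<times> T. \<nu> (part i t j))"
    by (simp add: sum.cartesian_product [symmetric] sum.swap [of _ J])
  also have "\<dots> \<le> (\<Sum>j\<in>J. 1)"
    by (rule sum_mono) (rule pack)
  finally show ?thesis by simp
qed

definition right_boundary :: "('a, 'b) monoid_scheme \<Rightarrow> 'a set \<Rightarrow> 'a set \<Rightarrow> 'a set" where
  "right_boundary G S B = (B <#>\<^bsub>G\<^esub> S) - B"

lemma finite_set_mult: "finite A \<Longrightarrow> finite B \<Longrightarrow> finite (A <#>\<^bsub>G\<^esub> B)"
  unfolding set_mult_def by auto

lemma finite_right_boundary: "finite B \<Longrightarrow> finite S \<Longrightarrow> finite (right_boundary G S B)"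
  unfolding right_boundary_def by (simp add: finite_set_mult)

lemma (in group) set_mult_insert_one:
  "B \<subseteq> carrier G \<Longrightarrow> B <#> insert \<one> S = B \<union> right_boundary G S B"
  unfolding right_boundary_def set_mult_def by (auto; metis r_one subsetD)

lemma (in group) hall_condition_if_boundary_large:
  assumes S: "finite S" "S \<subseteq> carrier G"
    and large: "\<And>B. finite B \<Longrightarrow> B \<subseteq> carrier G \<Longrightarrow> card B \<le> m * card (right_boundary G S B)"
  shows "hall_condition (carrier G \<times> {..<Suc m}) (\<lambda>(x, i). (x <# insert \<one> S) \<times> {..<m})"
  unfolding hall_condition_def
proof (intro allI impI)
  fix W assume W: "W \<subseteq> carrier G \<times> {..<Suc m}" "finite W"
  define P where "P = fst ` W"
  have P: "finite P" "P \<subseteq> carrier G" using W unfolding P_def by auto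
  have "card W \<le> card (P \<times> {..<Suc m})"
    using W P by (intro card_mono) (force simp: P_def)+
  also have "\<dots> = Suc m * card P" by (simp add: card_cartesian_product)
  also have "\<dots> \<le> m * (card P + card (right_boundary G S P))"
    using large[OF P] by (simp add: algebra_simps)
  also have "card P + card (right_boundary G S P) = card (P \<union> right_boundary G S P)"
    using P S by (intro card_Un_disjoint[symmetric]) (auto simp: finite_set_mult right_boundary_def)
  also have "\<dots> = card (P <#> insert \<one> S)"
    using P by (simp add: set_mult_insert_one)
  also have "m * card (P <#> insert \<one> S) = card ((P <#> insert \<one> S) \<times> {..<m})"
    by (simp add: card_cartesian_product)
  also have "(P <#> insert \<one> S) \<times> {..<m} = \<Union>((\<lambda>(x, i). (x <# insert \<one> S) \<times> {..<m}) ` W)"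
    unfolding P_def set_mult_def l_coset_def by force
  finally show "card W \<le> card (\<Union>((\<lambda>(x, i). (x <# insert \<one> S) \<times> {..<m}) ` W))" .
qed

lemma (in right_invariant_mean) exists_folner_set:
  assumes S: "finite S" "S \<subseteq> carrier G"
  shows "\<exists>B. finite B \<and> B \<noteq> {} \<and> B \<subseteq> carrier G \<and> m * card (right_boundary G S B) < card B"
proof (rule ccontr)
  assume "\<not> ?thesis"
  then have "card B \<le> m * card (right_boundary G S B)" if "finite B" "B \<subseteq> carrier G" for B
    using that by (cases "B = {}") (auto simp: not_less)
  then have hall: "hall_condition (carrier G \<times> {..<Suc m}) (\<lambda>(x, i). (x <# insert \<one> S) \<times> {..<m})"
    using S by (intro hall_condition_if_boundary_large)
  have "finite ((\<lambda>(x, i). (x <# insert \<one> S) \<times> {..<m}) p)" for p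
    using S(1) unfolding l_coset_def by (auto split: prod.split)
  then obtain \<psi> where "inj_on \<psi> (carrier G \<times> {..<Suc m})"
    and "\<And>x i. (x, i) \<in> carrier G \<times> {..<Suc m} \<Longrightarrow> \<psi> (x, i) \<in> (x <# insert \<one> S) \<times> {..<m}"
    using hall_marriage[OF _ hall] by (metis case_prod_conv)
  then have "card {..<Suc m} \<le> card {..<m}"
    using S by (intro card_le_if_inj_into_translates[of _ _ "insert \<one> S" \<psi>]) auto
  then show False by simp
qed

lemma is_path_prefix:
  assumes "is_path V E (xs @ ys)" "xs \<noteq> []"
  shows "is_path V E xs"
  unfolding is_path_def
proof (intro conjI allI impI)
  fix i assume i: "Suc i < length xs"
  then have "E ((xs @ ys) ! i) ((xs @ ys) ! Suc i)" using assms(1) unfolding is_path_def by simp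
  then show "E (xs ! i) (xs ! Suc i)" using i by (simp add: nth_append)
qed (use assms in \<open>auto simp: is_path_def\<close>)

lemma is_path_snoc:
  assumes "is_path V E p" "E (last p) w" "w \<in> V" "w \<notin> set p"
  shows "is_path V E (p @ [w])"
  unfolding is_path_def
proof (intro conjI allI impI)
  fix i assume i: "Suc i < length (p @ [w])"
  show "E ((p @ [w]) ! i) ((p @ [w]) ! Suc i)"
  proof (cases "Suc i < length p")
    case True
    then show ?thesis using assms(1) unfolding is_path_def by (simp add: nth_append)
  next
    case False
    with i have "length p = Suc i" by simp
    then show ?thesis using assms(1,2) unfolding is_path_def by (simp add: nth_append last_conv_nth)
  qed
qed (use assms in \<open>auto simp: is_path_def\<close>)

lemma dist_le_refl: "u \<in> V \<Longrightarrow> dist_le V E u u 0"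
  unfolding dist_le_def is_path_def by (intro exI[of _ "[u]"]) auto

lemma dist_le_mono: "dist_le V E u v n \<Longrightarrow> n \<le> k \<Longrightarrow> dist_le V E u v k"
  unfolding dist_le_def by auto

text \<open>Paths must be simple: if w already lies on the path, cut the path at w instead.\<close>

lemma dist_le_snoc:
  assumes "dist_le V E u v n" "E v w" "w \<in> V"
  shows "dist_le V E u w (Suc n)"
proof -
  obtain p where p: "is_path V E p" "hd p = u" "last p = v" "length p - 1 \<le> n"
    using assms(1) unfolding dist_le_def by blast
  show ?thesis
  proof (cases "w \<in> set p")
    case True
    then obtain xs ys where p_eq: "p = xs @ w # ys" by (meson split_list)
    then have "is_path V E (xs @ [w])" using p(1) is_path_prefix[of V E "xs @ [w]" ys] by simp
    moreover have "hd (xs @ [w]) = u" using p(2) p_eq by (cases xs) auto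
    moreover have "length (xs @ [w]) - 1 \<le> Suc n" using p(4) p_eq by simp
    ultimately show ?thesis unfolding dist_le_def by fastforce
  next
    case False
    have "p \<noteq> []" using p(1) unfolding is_path_def by blast
    then have "is_path V E (p @ [w]) \<and> hd (p @ [w]) = u \<and> last (p @ [w]) = w \<and>
        length (p @ [w]) - 1 \<le> Suc n"
      using p assms(2,3) False by (simp add: is_path_snoc)
    then show ?thesis unfolding dist_le_def by blast
  qed
qed

lemma ex_dist_le_if_rtranclp:
  assumes "E\<^sup>*\<^sup>* u v" "u \<in> V" "\<And>x y. E x y \<Longrightarrow> y \<in> V"
  shows "\<exists>n. dist_le V E u v n"
  using assms(1)
proof (induction rule: rtranclp_induct)
  case base
  then show ?case using assms(2) by (blast intro: dist_le_refl)
next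
  case (step v w)
  then show ?case using assms(3) by (blast intro: dist_le_snoc)
qed

lemma exists_exit_index:
  assumes "p \<noteq> []" "hd p \<in> B" "last p \<notin> B"
  shows "\<exists>i. Suc i < length p \<and> p ! i \<in> B \<and> p ! Suc i \<notin> B"
  using assms
proof (induction p)
  case Nil
  then show ?case by simp
next
  case (Cons x q)
  show ?case
  proof (cases "hd q \<in> B")
    case True
    with Cons obtain i where "Suc i < length q" "q ! i \<in> B" "q ! Suc i \<notin> B"
      by (cases q) auto
    then show ?thesis by (intro exI[of _ "Suc i"]) simp
  next
    case False
    with Cons show ?thesis by (intro exI[of _ 0]) (cases q; auto)
  qed
qed

definition outer_boundary :: "('v \<Rightarrow> 'v \<Rightarrow> bool) \<Rightarrow> 'v set \<Rightarrow> 'v set" where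
  "outer_boundary E U = {y. y \<notin> U \<and> (\<exists>x\<in>U. E x y)}"

lemma path_meets_outer_boundary:
  assumes "is_path V E p" "hd p \<in> U" "last p \<notin> U"
  shows "set p \<inter> outer_boundary E U \<noteq> {}"
proof -
  have "p \<noteq> []" using assms(1) unfolding is_path_def by blast
  then obtain i where i: "Suc i < length p" "p ! i \<in> U" "p ! Suc i \<notin> U"
    using assms exists_exit_index by blast
  then have "p ! Suc i \<in> outer_boundary E U"
    using assms(1) unfolding is_path_def outer_boundary_def by blast
  then show ?thesis using i(1) nth_mem by blast
qed

theorem extraterrestrial_if_folner_sets:
  assumes "infinite V" and edges: "\<And>x y. E x y \<Longrightarrow> y \<in> V"
    and connected: "\<And>u v. u \<in> V \<Longrightarrow> v \<in> V \<Longrightarrow> E\<^sup>*\<^sup>* u v"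
    and folner: "\<And>m. \<exists>U. finite U \<and> U \<noteq> {} \<and> U \<subseteq> V \<and> finite (outer_boundary E U) \<and>
      m * card (outer_boundary E U) \<le> card U"
  shows "extraterrestrial V E"
  unfolding extraterrestrial_def
proof
  fix m
  obtain U where U: "finite U" "U \<noteq> {}" "U \<subseteq> V" "finite (outer_boundary E U)"
    "m * card (outer_boundary E U) \<le> card U"
    using folner by blast
  define F where "F = outer_boundary E U"
  have F: "finite F" "F \<subseteq> V" "U \<inter> F = {}"
    using U(4) edges unfolding F_def outer_boundary_def by auto
  have "infinite (V - (U \<union> F))" using assms(1) U(1) F(1) by simp
  then obtain Ob where Ob: "finite Ob" "card Ob = card U" "Ob \<subseteq> V - (U \<union> F)"
    by (meson infinite_arbitrarily_large)
  then obtain \<mu> where \<mu>: "bij_betw \<mu> U Ob"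
    using finite_same_card_bij[OF U(1) Ob(1) Ob(2)[symmetric]] by blast
  have "\<mu> u \<in> V" if "u \<in> U" for u using bij_betwE[OF \<mu>] that Ob(3) by blast
  then have "\<forall>u\<in>U. \<exists>n. dist_le V E u (\<mu> u) n"
    using U(3) by (blast intro: ex_dist_le_if_rtranclp connected edges)
  then obtain n where n: "\<forall>u\<in>U. dist_le V E u (\<mu> u) (n u)" by (rule bchoice[THEN exE])
  define k where "k = Max (n ` U)"
  have dist: "dist_le V E u (\<mu> u) k" if "u \<in> U" for u
    using n that U(1) unfolding k_def by (auto intro: dist_le_mono)
  have "set p \<inter> F \<noteq> {}" if "is_path V E p" "hd p \<in> U" "last p \<in> Ob" for p
    using that Ob(3) path_meets_outer_boundary unfolding F_def by blast
  then have "is_UFO V E m k r U F Ob" for r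
    unfolding is_UFO_def using U[folded F_def] F Ob \<mu> dist by blast
  then show "\<exists>k. \<forall>r. \<exists>U F Ob. is_UFO V E m k r U F Ob" by blast
qed

lemma (in group) cayley_adj_rtranclp_mult_generator:
  assumes "S \<subseteq> carrier G" "s \<in> S" "x \<in> carrier G"
  shows "(cayley_adj G S)\<^sup>*\<^sup>* x (x \<otimes> s)"
proof (cases "x \<otimes> s = x")
  case False
  with assms have "cayley_adj G S x (x \<otimes> s)" unfolding cayley_adj_def by auto
  then show ?thesis by (rule r_into_rtranclp)
qed simp

lemma (in group) cayley_adj_rtranclp_mult:
  assumes S: "S \<subseteq> carrier G" "\<And>s. s \<in> S \<Longrightarrow> inv s \<in> S"
    and "h \<in> generate G S" "x \<in> carrier G"
  shows "(cayley_adj G S)\<^sup>*\<^sup>* x (x \<otimes> h)"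
  using assms(3,4)
proof (induction h arbitrary: x rule: generate.induct)
  case one
  then show ?case by simp
next
  case (incl h)
  then show ?case using S(1) by (intro cayley_adj_rtranclp_mult_generator)
next
  case (inv h)
  then show ?case using S by (intro cayley_adj_rtranclp_mult_generator) auto
next
  case (eng h1 h2)
  have carrier: "h1 \<in> carrier G" "h2 \<in> carrier G"
    using eng.hyps S(1) by (auto intro: generate_in_carrier)
  have "(cayley_adj G S)\<^sup>*\<^sup>* x (x \<otimes> h1)" using eng.IH(1) eng.prems .
  moreover have "(cayley_adj G S)\<^sup>*\<^sup>* (x \<otimes> h1) (x \<otimes> h1 \<otimes> h2)"
    using eng.IH(2) eng.prems carrier by simp
  ultimately show ?case using eng.prems carrier by (simp add: m_assoc)
qed

lemma (in group) cayley_adj_connected: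
  assumes "finite_symmetric_generating_set G S" "x \<in> carrier G" "y \<in> carrier G"
  shows "(cayley_adj G S)\<^sup>*\<^sup>* x y"
proof -
  have "(cayley_adj G S)\<^sup>*\<^sup>* x (x \<otimes> (inv x \<otimes> y))"
    using assms unfolding finite_symmetric_generating_set_def
    by (intro cayley_adj_rtranclp_mult) auto
  then show ?thesis using assms(2,3) by (simp flip: m_assoc)
qed

lemma (in group) outer_boundary_cayley_adj:
  "B \<subseteq> carrier G \<Longrightarrow> S \<subseteq> carrier G \<Longrightarrow> outer_boundary (cayley_adj G S) B = right_boundary G S B"
  unfolding outer_boundary_def cayley_adj_def right_boundary_def set_mult_def
  by (fastforce intro: m_closed)

lemma (in group) finitely_generated_group_symmetric_generating_set:
  assumes "finitely_generated_group G"
  shows "\<exists>S. finite_symmetric_generating_set G S"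
proof -
  obtain S where S: "finite S" "S \<subseteq> carrier G" "generate G S = carrier G"
    using assms unfolding finitely_generated_group_def by blast
  have "S \<union> m_inv G ` S \<subseteq> carrier G" using S(2) by auto
  then have "generate G (S \<union> m_inv G ` S) = carrier G"
    using S(3) mono_generate[of S "S \<union> m_inv G ` S"] generate_in_carrier by blast
  then have "finite_symmetric_generating_set G (S \<union> m_inv G ` S)"
    using S unfolding finite_symmetric_generating_set_def by auto
  then show ?thesis ..
qed

theorem mainTheorem5:
  fixes G :: "('a, 'b) monoid_scheme"
  assumes "group G"
    and "finitely_generated_group G"
    and "infinite (carrier G)"
    and "amenable_group G"
  shows "extraterrestrial_group G"
proof -
  obtain \<nu> where "right_invariant_mean G \<nu>"
    using amenable_group_right_invariant_mean[OF assms(4)] by blast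
  then interpret right_invariant_mean G \<nu> .
  obtain S where S: "finite_symmetric_generating_set G S"
    using finitely_generated_group_symmetric_generating_set[OF assms(2)] by blast
  then have S_fin: "finite S" "S \<subseteq> carrier G" unfolding finite_symmetric_generating_set_def by auto
  have "extraterrestrial (carrier G) (cayley_adj G S)"
  proof (rule extraterrestrial_if_folner_sets)
    show "infinite (carrier G)" by fact
    show "\<And>x y. cayley_adj G S x y \<Longrightarrow> y \<in> carrier G" unfolding cayley_adj_def by blast
    show "\<And>x y. x \<in> carrier G \<Longrightarrow> y \<in> carrier G \<Longrightarrow> (cayley_adj G S)\<^sup>*\<^sup>* x y"
      using S by (rule cayley_adj_connected)
    fix m
    obtain B where "finite B" "B \<noteq> {}" "B \<subseteq> carrier G" "m * card (right_boundary G S B) < card B"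
      using exists_folner_set[OF S_fin] by blast
    then show "\<exists>U. finite U \<and> U \<noteq> {} \<and> U \<subseteq> carrier G \<and> finite (outer_boundary (cayley_adj G S) U) \<and>
        m * card (outer_boundary (cayley_adj G S) U) \<le> card U"
      using S_fin by (intro exI[of _ B]) (simp add: outer_boundary_cayley_adj finite_right_boundary)
  qed
  with S show ?thesis unfolding extraterrestrial_group_def by blast
qed

end
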